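(* Let $(e_i)$ denote the canonical basis of $\ell_1$, and for $n\in\mathbb{N}$ let $x_n=e_n-\tfrac12(e_{2n+1}+e_{2n+2})$. For each $n$, let $x^{(n)}_1,\dots,x^{(n)}_n$ be the copies of $x_1,\dots,x_n$ (which lie in $\ell_1^{2n+2}$) inside the $n$-th summand of the Banach lattice $Y=\big(\sum_{n}\ell_1^{2n+2}\big)_{\ell_1}$ (with its coordinatewise order). Then the sequence $\big(x^{(n)}_i\big)_{1\le i\le n,\,n\in\mathbb{N}}$, ordered by $n$ first and then by $i$, is neither uniformly quasi-greedy nor bibasic in $Y$.
   Context: A sequence $(x_k)$ of nonzero vectors in a Banach lattice is bibasic if there is $M\ge1$ with $\|\bigvee_{n=1}^m|\sum_{k=1}^na_kx_k|\|\le M\|\sum_{k=1}^ma_kx_k\|$ for all $m$ and scalars $a_k$. A semi-normalized basic sequence $(x_k)$ with span $E$ and biorthogonal functionals $x_k^*$ is uniformly quasi-greedy if $\sup_m\sup_{x\in E,\|x\|=1}\|\bigvee_{n=1}^m|\mathcal{G}_n(x)|\|<\infty$, where $\mathcal{G}_n(x)=\sum_{j=1}^n x^*_{\rho(j)}(x)x_{\rho(j)}$ and $\rho$ is the natural greedy ordering of $x$ (indices listed by non-increasing $|x_k^*(x)|$, ties broken by increasing index). (The sequence $(x^{(n)}_i)$ is known to be a semi-normalized quasi-greedy basic sequence in $Y$.) *)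

theory Defs
  imports "HOL-Analysis.Analysis"
begin

text \<open>The Banach lattice Y = (sum_n l1^{2n+2})_{l1} is realised as l1 over the
index set of pairs (n, j) (summand n, coordinate j), with coordinatewise order:
lattice operations are pointwise, |f| is pointwise absolute value.\<close>

definition l1space :: "('i \<Rightarrow> real) set" where
  "l1space = {f. (\<lambda>t. \<bar>f t\<bar>) summable_on UNIV}"

definition l1norm :: "('i \<Rightarrow> real) \<Rightarrow> real" where
  "l1norm f = (\<Sum>\<^sub>\<infinity>t. \<bar>f t\<bar>)"

text \<open>Sequences are indexed from 1 (index 0 is ignored).\<close>

definition l1_bibasic :: "(nat \<Rightarrow> 'i \<Rightarrow> real) \<Rightarrow> bool" where
  "l1_bibasic x \<longleftrightarrow> (\<exists>M\<ge>1. \<forall>m\<ge>1. \<forall>a::nat \<Rightarrow> real.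
     l1norm (\<lambda>t. Max ((\<lambda>n. \<bar>\<Sum>k\<in>{1..n}. a k * x k t\<bar>) ` {1..m}))
       \<le> M * l1norm (\<lambda>t. \<Sum>k\<in>{1..m}. a k * x k t))"

definition l1_span :: "(nat \<Rightarrow> 'i \<Rightarrow> real) \<Rightarrow> ('i \<Rightarrow> real) set" where
  "l1_span x = {f. \<exists>n (a::nat \<Rightarrow> real). f = (\<lambda>t. \<Sum>k\<in>{1..n}. a k * x k t)}"

definition l1_closed_span :: "(nat \<Rightarrow> 'i \<Rightarrow> real) \<Rightarrow> ('i \<Rightarrow> real) set" where
  "l1_closed_span x = {f \<in> l1space. \<forall>\<epsilon>>0. \<exists>g\<in>l1_span x. l1norm (\<lambda>t. f t - g t) < \<epsilon>}"

text \<open>Biorthogonal functionals of a basic sequence: coefficients of the (unique)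
norm-convergent expansion y = sum_k x_k^*(y) x_k.\<close>
definition l1_coeffs :: "(nat \<Rightarrow> 'i \<Rightarrow> real) \<Rightarrow> ('i \<Rightarrow> real) \<Rightarrow> nat \<Rightarrow> real" where
  "l1_coeffs x y = (THE a. a 0 = 0 \<and>
     (\<lambda>m. l1norm (\<lambda>t. y t - (\<Sum>k\<in>{1..m}. a k * x k t))) \<longlonglongrightarrow> 0)"

text \<open>Indices preceding k in the natural greedy ordering of coefficient sequence c
(non-increasing |c_k|, ties broken by increasing index).\<close>
definition greedy_pred :: "(nat \<Rightarrow> real) \<Rightarrow> nat \<Rightarrow> nat set" where
  "greedy_pred c k = {j. 1 \<le> j \<and> (\<bar>c j\<bar> > \<bar>c k\<bar> \<or> (\<bar>c j\<bar> = \<bar>c k\<bar> \<and> j < k))}"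

text \<open>The set {rho(1),...,rho(n)} of the first n indices in the greedy ordering
(indices with zero coefficient that are never reached are irrelevant for G_n).\<close>
definition greedy_set :: "(nat \<Rightarrow> real) \<Rightarrow> nat \<Rightarrow> nat set" where
  "greedy_set c n = {k. 1 \<le> k \<and> finite (greedy_pred c k) \<and> card (greedy_pred c k) < n}"

definition greedy_sum :: "(nat \<Rightarrow> 'i \<Rightarrow> real) \<Rightarrow> ('i \<Rightarrow> real) \<Rightarrow> nat \<Rightarrow> 'i \<Rightarrow> real" where
  "greedy_sum x y n = (\<lambda>t. \<Sum>k\<in>greedy_set (l1_coeffs x y) n. l1_coeffs x y k * x k t)"

definition l1_uniformly_quasi_greedy :: "(nat \<Rightarrow> 'i \<Rightarrow> real) \<Rightarrow> bool" where
  "l1_uniformly_quasi_greedy x \<longleftrightarrow> (\<exists>C. \<forall>m\<ge>1. \<forall>y\<in>l1_closed_span x. l1norm y = 1 \<longrightarrow>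
     l1norm (\<lambda>t. Max ((\<lambda>n. \<bar>greedy_sum x y n t\<bar>) ` {1..m})) \<le> C)"

definition xcoord :: "nat \<Rightarrow> nat \<Rightarrow> real" where
  "xcoord i j = (if j = i then 1 else if j = 2*i+1 \<or> j = 2*i+2 then -1/2 else 0)"

text \<open>Position k (1-based) of the sequence corresponds to the pair (n, i),
1 \<le> i \<le> n, with k = n(n-1)/2 + i (order by n first, then by i).\<close>
definition blk :: "nat \<Rightarrow> nat \<times> nat" where
  "blk k = (THE p. 1 \<le> snd p \<and> snd p \<le> fst p \<and> k = fst p * (fst p - 1) div 2 + snd p)"

definition Yseq :: "nat \<Rightarrow> nat \<times> nat \<Rightarrow> real" where
  "Yseq k = (\<lambda>(m, j). if m = fst (blk k) then xcoord (snd (blk k)) j else 0)"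

end

theory Submission
  imports Defs
begin

text \<open>With weights c_1 = c_2 = 1 and c_(2i+1) = c_(2i+2) = c_i / 2, the sum of c_i x_i over
i \<le> r telescopes: a coordinate j \<ge> 3 receives c_j from x_j and -c_j from its parent
x_((j-1) div 2). Hence u_N = \<Sum>_(i \<le> N) c_i x_i^(N) has norm at most 7, while the partial
sum stopping at the parent of j leaves -c_j uncancelled at coordinate j. So the supremum of
the partial sums of u_N has norm at least \<Sum>_(j=3..2N+2) c_j \<ge> \<Sum>_(j=3..2N+2) 1/(j+1), which
is unbounded, and the sequence is not bibasic. As c is non-increasing, the greedy sums of u_N
are exactly its partial sums, so the normalised u_N also rule out uniform quasi-greediness.\<close>

lemma l1norm_finite_support:
  assumes "finite U" "\<And>t. t \<notin> U \<Longrightarrow> f t = 0"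
  shows "l1norm f = (\<Sum>t\<in>U. \<bar>f t\<bar>)"
proof -
  have "l1norm f = infsum (\<lambda>t. \<bar>f t\<bar>) U"
    unfolding l1norm_def by (rule infsum_cong_neutral) (use assms in auto)
  then show ?thesis using assms by simp
qed

lemma l1space_finite_support:
  assumes "finite {t. f t \<noteq> 0}"
  shows "f \<in> l1space"
proof -
  have "(\<lambda>t. \<bar>f t\<bar>) summable_on {t. f t \<noteq> 0}" using assms by simp
  then have "(\<lambda>t. \<bar>f t\<bar>) summable_on UNIV"
    by (rule summable_on_cong_neutral[THEN iffD1, rotated -1]) auto
  then show ?thesis unfolding l1space_def by simp
qed

lemma sum_abs_le_l1norm:
  assumes "finite {t. f t \<noteq> 0}" "finite S"
  shows "(\<Sum>t\<in>S. \<bar>f t\<bar>) \<le> l1norm f"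
proof -
  have "(\<Sum>t\<in>S. \<bar>f t\<bar>) \<le> (\<Sum>t\<in>S \<union> {t. f t \<noteq> 0}. \<bar>f t\<bar>)"
    by (rule sum_mono2) (use assms in auto)
  also have "\<dots> = l1norm f"
    by (rule l1norm_finite_support[symmetric]) (use assms in auto)
  finally show ?thesis .
qed

lemma finite_support_lincomb:
  fixes x :: "'k \<Rightarrow> 'i \<Rightarrow> real"
  assumes "finite K" "\<And>k. k \<in> K \<Longrightarrow> finite {t. x k t \<noteq> 0}"
  shows "finite {t. (\<Sum>k\<in>K. a k * x k t) \<noteq> 0}"
proof (rule finite_subset)
  show "{t. (\<Sum>k\<in>K. a k * x k t) \<noteq> 0} \<subseteq> (\<Union>k\<in>K. {t. x k t \<noteq> 0})"
  proof
    fix t assume "t \<in> {t. (\<Sum>k\<in>K. a k * x k t) \<noteq> 0}"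
    then obtain k where "k \<in> K" "a k * x k t \<noteq> 0"
      by (blast elim: sum.not_neutral_contains_not_neutral)
    then show "t \<in> (\<Union>k\<in>K. {t. x k t \<noteq> 0})" by auto
  qed
qed (use assms in auto)

lemma sum_le_l1norm_Max_abs:
  fixes F :: "'n \<Rightarrow> 'i \<Rightarrow> real"
  assumes I: "finite I" "I \<noteq> {}" and supp: "\<And>n. n \<in> I \<Longrightarrow> finite {t. F n t \<noteq> 0}"
    and S: "finite S" and witness: "\<And>t. t \<in> S \<Longrightarrow> \<exists>n\<in>I. w t \<le> \<bar>F n t\<bar>"
  shows "(\<Sum>t\<in>S. w t) \<le> l1norm (\<lambda>t. Max ((\<lambda>n. \<bar>F n t\<bar>) ` I))"
proof -
  define G where "G t = Max ((\<lambda>n. \<bar>F n t\<bar>) ` I)" for t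
  have G_ge: "\<bar>F n t\<bar> \<le> G t" if "n \<in> I" for n t
    unfolding G_def using I that by simp
  have "{t. G t \<noteq> 0} \<subseteq> (\<Union>n\<in>I. {t. F n t \<noteq> 0})"
  proof
    fix t assume "t \<in> {t. G t \<noteq> 0}"
    moreover have "G t \<in> (\<lambda>n. \<bar>F n t\<bar>) ` I"
      unfolding G_def using I by (intro Max_in) auto
    ultimately show "t \<in> (\<Union>n\<in>I. {t. F n t \<noteq> 0})" by auto
  qed
  then have G_supp: "finite {t. G t \<noteq> 0}"
    by (rule finite_subset) (use I supp in auto)
  have "(\<Sum>t\<in>S. w t) \<le> (\<Sum>t\<in>S. \<bar>G t\<bar>)"
  proof (rule sum_mono)
    fix t assume "t \<in> S"
    then obtain n where "n \<in> I" "w t \<le> \<bar>F n t\<bar>" using witness by blast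
    then show "w t \<le> \<bar>G t\<bar>" using G_ge[of n t] by linarith
  qed
  also have "\<dots> \<le> l1norm G" by (rule sum_abs_le_l1norm[OF G_supp S])
  finally show ?thesis unfolding G_def .
qed

lemma lincomb_tendsto_0_imp_coeff_0:
  fixes x :: "nat \<Rightarrow> 'i \<Rightarrow> real" and pivot :: "nat \<Rightarrow> 'i"
  assumes at_pivot: "\<And>k. 1 \<le> k \<Longrightarrow> x k (pivot k) \<noteq> 0"
    and after_pivot: "\<And>k k'. 1 \<le> k \<Longrightarrow> k < k' \<Longrightarrow> x k' (pivot k) = 0"
    and supp: "\<And>k. finite {t. x k t \<noteq> 0}"
    and lim: "(\<lambda>m. l1norm (\<lambda>t. \<Sum>k\<in>{1..m}. e k * x k t)) \<longlonglongrightarrow> 0"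
  shows "1 \<le> k \<Longrightarrow> e k = 0"
proof (induction k rule: less_induct)
  case (less k)
  have at_pivot_sum: "(\<Sum>k'\<in>{1..m}. e k' * x k' (pivot k)) = e k * x k (pivot k)" if "k \<le> m" for m
  proof -
    have "(\<Sum>k'\<in>{1..m}. e k' * x k' (pivot k)) = (\<Sum>k'\<in>{k}. e k' * x k' (pivot k))"
    proof (rule sum.mono_neutral_right)
      show "\<forall>k'\<in>{1..m} - {k}. e k' * x k' (pivot k) = 0"
      proof
        fix k' assume "k' \<in> {1..m} - {k}"
        then have "1 \<le> k'" "k' < k \<or> k < k'" by auto
        then show "e k' * x k' (pivot k) = 0"
          using less.IH after_pivot[OF less.prems] by auto
      qed
    qed (use that less.prems in auto)
    then show ?thesis by simp
  qed
  have bound: "\<bar>e k * x k (pivot k)\<bar> \<le> l1norm (\<lambda>t. \<Sum>k\<in>{1..m}. e k * x k t)"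
    if "k \<le> m" for m
  proof -
    have "finite {t. (\<Sum>k\<in>{1..m}. e k * x k t) \<noteq> 0}"
      by (rule finite_support_lincomb) (use supp in auto)
    from sum_abs_le_l1norm[OF this, of "{pivot k}"] show ?thesis
      using at_pivot_sum[OF that] by simp
  qed
  have "\<bar>e k * x k (pivot k)\<bar> \<le> 0"
    by (rule LIMSEQ_le_const[OF lim]) (use bound in blast)
  then show ?case using at_pivot[OF less.prems] by simp
qed

lemma l1_coeffs_lincomb:
  fixes x :: "nat \<Rightarrow> 'i \<Rightarrow> real" and pivot :: "nat \<Rightarrow> 'i"
  assumes at_pivot: "\<And>k. 1 \<le> k \<Longrightarrow> x k (pivot k) \<noteq> 0"
    and after_pivot: "\<And>k k'. 1 \<le> k \<Longrightarrow> k < k' \<Longrightarrow> x k' (pivot k) = 0"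
    and supp: "\<And>k. finite {t. x k t \<noteq> 0}"
    and a: "a 0 = 0" "\<And>k. M < k \<Longrightarrow> a k = 0"
  shows "l1_coeffs x (\<lambda>t. \<Sum>k\<in>{1..M}. a k * x k t) = a"
proof -
  have extend: "(\<Sum>k\<in>{1..M}. a k * x k t) = (\<Sum>k\<in>{1..m}. a k * x k t)" if "M \<le> m" for m t
    by (rule sum.mono_neutral_left) (use that a in auto)
  show ?thesis
    unfolding l1_coeffs_def
  proof (rule the_equality)
    have "l1norm (\<lambda>t. (\<Sum>k\<in>{1..M}. a k * x k t) - (\<Sum>k\<in>{1..m}. a k * x k t)) = 0"
      if "M \<le> m" for m
      unfolding extend[OF that] by (simp add: l1norm_def)
    then have "\<forall>\<^sub>F m in sequentially.
        l1norm (\<lambda>t. (\<Sum>k\<in>{1..M}. a k * x k t) - (\<Sum>k\<in>{1..m}. a k * x k t)) = 0"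
      unfolding eventually_sequentially by blast
    with a show "a 0 = 0 \<and> (\<lambda>m. l1norm (\<lambda>t. (\<Sum>k\<in>{1..M}. a k * x k t)
        - (\<Sum>k\<in>{1..m}. a k * x k t))) \<longlonglongrightarrow> 0"
      by (simp add: tendsto_eventually)
  next
    fix b assume b: "b 0 = 0 \<and> (\<lambda>m. l1norm (\<lambda>t. (\<Sum>k\<in>{1..M}. a k * x k t)
        - (\<Sum>k\<in>{1..m}. b k * x k t))) \<longlonglongrightarrow> 0"
    have "(\<Sum>k\<in>{1..M}. a k * x k t) - (\<Sum>k\<in>{1..m}. b k * x k t)
        = (\<Sum>k\<in>{1..m}. (a k - b k) * x k t)" if "M \<le> m" for m t
      unfolding extend[OF that] by (simp add: left_diff_distrib sum_subtractf)
    then have "\<forall>\<^sub>F m in sequentially. l1norm (\<lambda>t. (\<Sum>k\<in>{1..M}. a k * x k t)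
        - (\<Sum>k\<in>{1..m}. b k * x k t)) = l1norm (\<lambda>t. \<Sum>k\<in>{1..m}. (a k - b k) * x k t)"
      unfolding eventually_sequentially by (intro exI[of _ M]) simp
    from Lim_transform_eventually[OF b[THEN conjunct2] this]
    have "(\<lambda>m. l1norm (\<lambda>t. \<Sum>k\<in>{1..m}. (a k - b k) * x k t)) \<longlonglongrightarrow> 0" .
    from lincomb_tendsto_0_imp_coeff_0[OF at_pivot after_pivot supp this]
    have "a k = b k" if "1 \<le> k" for k
      using that by simp
    moreover have "a 0 = b 0" using a b by simp
    ultimately show "b = a"
      by (metis One_nat_def Suc_leI ext neq0_conv)
  qed
qed

lemma greedy_pred_nonincreasing_block:
  fixes a :: "nat \<Rightarrow> real"
  assumes supp: "\<And>k. a k \<noteq> 0 \<longleftrightarrow> M < k \<and> k \<le> M + N"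
    and antimono: "\<And>i j. M < i \<Longrightarrow> i \<le> j \<Longrightarrow> j \<le> M + N \<Longrightarrow> \<bar>a j\<bar> \<le> \<bar>a i\<bar>"
    and i: "1 \<le> i" "i \<le> N"
  shows "greedy_pred a (M + i) = {M + 1..<M + i}"
proof (intro set_eqI iffI)
  fix j assume "j \<in> greedy_pred a (M + i)"
  then have j: "\<bar>a (M + i)\<bar> < \<bar>a j\<bar> \<or> (\<bar>a j\<bar> = \<bar>a (M + i)\<bar> \<and> j < M + i)"
    by (simp add: greedy_pred_def)
  have "a (M + i) \<noteq> 0" using supp i by simp
  with j have "a j \<noteq> 0" by auto
  then have block: "M < j" "j \<le> M + N" using supp by auto
  show "j \<in> {M + 1..<M + i}"
  proof (rule ccontr)
    assume "j \<notin> {M + 1..<M + i}"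
    then have "M + i \<le> j" using block by auto
    moreover have "\<bar>a j\<bar> \<le> \<bar>a (M + i)\<bar>" using antimono[of "M + i" j] i block \<open>M + i \<le> j\<close> by simp
    ultimately show False using j by auto
  qed
next
  fix j assume j: "j \<in> {M + 1..<M + i}"
  then have "\<bar>a (M + i)\<bar> \<le> \<bar>a j\<bar>" using antimono[of j "M + i"] i by simp
  with j show "j \<in> greedy_pred a (M + i)" by (auto simp: greedy_pred_def)
qed

lemma sum_greedy_set_nonincreasing_block:
  fixes a g :: "nat \<Rightarrow> real"
  assumes supp: "\<And>k. a k \<noteq> 0 \<longleftrightarrow> M < k \<and> k \<le> M + N"
    and antimono: "\<And>i j. M < i \<Longrightarrow> i \<le> j \<Longrightarrow> j \<le> M + N \<Longrightarrow> \<bar>a j\<bar> \<le> \<bar>a i\<bar>"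
    and n: "n \<le> N"
  shows "(\<Sum>k\<in>greedy_set a n. a k * g k) = (\<Sum>k\<in>{M + 1..M + n}. a k * g k)"
proof (rule sum.mono_neutral_right)
  note greedy_pred = greedy_pred_nonincreasing_block[OF supp antimono]
  show "{M + 1..M + n} \<subseteq> greedy_set a n"
  proof
    fix k assume k: "k \<in> {M + 1..M + n}"
    then have "1 \<le> k - M" "k - M \<le> N" using n by auto
    with k have "greedy_pred a k = {M + 1..<k}"
      using greedy_pred[of "k - M"] by simp
    then show "k \<in> greedy_set a n"
      using k by (auto simp: greedy_set_def)
  qed
  \<comment> \<open>\<open>greedy_set\<close> may also contain indices with zero coefficient, but only finitely many\<close>
  have outside: "a k = 0 \<and> k \<le> n" if k: "k \<in> greedy_set a n" "k \<notin> {M + 1..M + n}" for k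
  proof -
    have k1: "1 \<le> k" and fin: "finite (greedy_pred a k)" and card: "card (greedy_pred a k) < n"
      using k(1) by (simp_all add: greedy_set_def)
    have "a k = 0"
    proof (rule ccontr)
      assume "a k \<noteq> 0"
      then have "M < k" "k \<le> M + N" using supp by blast+
      then have "1 \<le> k - M" "k - M \<le> N" by auto
      with \<open>M < k\<close> have "greedy_pred a k = {M + 1..<k}"
        using greedy_pred[of "k - M"] by simp
      then show False using card k(2) \<open>M < k\<close> by simp
    qed
    then have "{1..<k} \<subseteq> greedy_pred a k"
      by (auto simp: greedy_pred_def)
    then have "card {1..<k} \<le> card (greedy_pred a k)" by (rule card_mono[OF fin])
    with \<open>a k = 0\<close> show ?thesis using card k1 by simp
  qed
  then have "greedy_set a n \<subseteq> {M + 1..M + n} \<union> {..n}" by blast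
  then show "finite (greedy_set a n)" by (rule finite_subset) simp
  show "\<forall>k\<in>greedy_set a n - {M + 1..M + n}. a k * g k = 0" using outside by simp
qed

text \<open>The weights c_j of the header; (j - 1) div 2 is the parent of j, i.e. the index i with
j \<in> {2i+1, 2i+2}. The value at 0 is junk and never used.\<close>
fun tree_weight :: "nat \<Rightarrow> real" where
  "tree_weight j = (if j \<le> 2 then 1 else tree_weight ((j - 1) div 2) / 2)"

declare tree_weight.simps[simp del]

lemma tree_weight_small: "j \<le> 2 \<Longrightarrow> tree_weight j = 1"
  by (subst tree_weight.simps) simp

lemma tree_weight_child: "3 \<le> j \<Longrightarrow> tree_weight j = tree_weight ((j - 1) div 2) / 2"
  by (subst tree_weight.simps) simp

lemma tree_weight_pos: "0 < tree_weight j"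
  by (induction j rule: tree_weight.induct) (subst tree_weight.simps, simp)

lemma tree_weight_le_1: "tree_weight j \<le> 1"
  by (induction j rule: tree_weight.induct) (subst tree_weight.simps, auto)

lemma tree_weight_antimono: "1 \<le> i \<Longrightarrow> i \<le> j \<Longrightarrow> tree_weight j \<le> tree_weight i"
proof (induction j arbitrary: i rule: less_induct)
  case (less j)
  consider "j \<le> 2" | "i \<le> 2" "3 \<le> j" | "3 \<le> i" by linarith
  then show ?case
  proof cases
    case 1
    then show ?thesis using less.prems by (simp add: tree_weight_small)
  next
    case 2
    then show ?thesis
      using tree_weight_le_1[of "(j - 1) div 2"] by (simp add: tree_weight_small tree_weight_child)
  next
    case 3
    then have "tree_weight ((j - 1) div 2) \<le> tree_weight ((i - 1) div 2)"
      using less.prems by (intro less.IH) (auto intro: div_le_mono)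
    then show ?thesis using 3 less.prems by (simp add: tree_weight_child)
  qed
qed

lemma tree_weight_upper: "tree_weight j \<le> 4 / (real j + 2)"
proof (induction j rule: tree_weight.induct)
  case (1 j)
  show ?case
  proof (cases "j \<le> 2")
    case True
    then show ?thesis by (simp add: tree_weight_small)
  next
    case False
    let ?p = "(j - 1) div 2"
    have "j \<le> 2 * ?p + 2" using False by auto
    then have "real j \<le> real (2 * ?p + 2)" by (simp only: of_nat_le_iff)
    then have "real j + 2 \<le> 2 * (real ?p + 2)" by simp
    then have "4 / (real ?p + 2) / 2 \<le> 4 / (real j + 2)" by (simp add: frac_le field_simps)
    moreover have "tree_weight ?p / 2 \<le> 4 / (real ?p + 2) / 2"
      by (rule divide_right_mono) (use 1 False in simp_all)
    ultimately show ?thesis using False by (simp add: tree_weight_child)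
  qed
qed

lemma tree_weight_lower: "1 / (real j + 1) \<le> tree_weight j"
proof (induction j rule: tree_weight.induct)
  case (1 j)
  show ?case
  proof (cases "j \<le> 2")
    case True
    then show ?thesis by (simp add: tree_weight_small)
  next
    case False
    let ?p = "(j - 1) div 2"
    have "2 * ?p + 1 \<le> j" using False by auto
    then have "real (2 * ?p + 1) \<le> real j" by (simp only: of_nat_le_iff)
    then have "2 * (real ?p + 1) \<le> real j + 1" by simp
    then have "1 / (real j + 1) \<le> 1 / (real ?p + 1) / 2" by (simp add: frac_le field_simps)
    moreover have "1 / (real ?p + 1) / 2 \<le> tree_weight ?p / 2"
      by (rule divide_right_mono) (use 1 False in simp_all)
    ultimately show ?thesis using False by (simp add: tree_weight_child)
  qed
qed

lemma harm_le_3_plus_sum: "harm (K + 1) \<le> 3 + (\<Sum>j\<in>{3..K}. 1 / (real j + 1) :: real)"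
proof -
  have "harm (K + 1) = (\<Sum>j<K + 1. 1 / (real j + 1) :: real)"
    by (simp add: harm_altdef inverse_eq_divide add.commute)
  also have "\<dots> \<le> (\<Sum>j\<in>{..<3} \<union> {3..K}. 1 / (real j + 1))"
    by (rule sum_mono2) auto
  also have "\<dots> = (\<Sum>j<3. 1 / (real j + 1)) + (\<Sum>j\<in>{3..K}. 1 / (real j + 1))"
    by (rule sum.union_disjoint) auto
  also have "(\<Sum>j<3. 1 / (real j + 1)) \<le> 3"
    by (simp add: numeral_3_eq_3)
  finally show ?thesis by simp
qed

lemma sum_tree_weight_unbounded: "\<exists>N\<ge>2. B < (\<Sum>j\<in>{3..2 * N + 2}. tree_weight j)"
proof -
  obtain n0 where n0: "\<And>n. n0 \<le> n \<Longrightarrow> B + 4 \<le> harm n"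
    using harm_at_top[unfolded filterlim_at_top] by (auto simp: eventually_sequentially)
  define N where "N = max 2 n0"
  have "n0 \<le> 2 * N + 2 + 1" by (simp add: N_def)
  then have "B + 3 < harm (2 * N + 2 + 1)" using n0 by fastforce
  also have "\<dots> \<le> 3 + (\<Sum>j\<in>{3..2 * N + 2}. 1 / (real j + 1))" by (rule harm_le_3_plus_sum)
  also have "(\<Sum>j\<in>{3..2 * N + 2}. 1 / (real j + 1)) \<le> (\<Sum>j\<in>{3..2 * N + 2}. tree_weight j)"
    by (rule sum_mono) (rule tree_weight_lower)
  finally show ?thesis by (intro exI[of _ N]) (simp add: N_def)
qed

definition block_offset :: "nat \<Rightarrow> nat" where
  "block_offset n = n * (n - 1) div 2"

lemma block_offset_Suc: "block_offset (Suc n) = block_offset n + n"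
proof -
  have "Suc n * n = n * (n - 1) + 2 * n" by (cases n) (auto simp: algebra_simps)
  then show ?thesis unfolding block_offset_def by simp
qed

lemma block_offset_mono: "m \<le> n \<Longrightarrow> block_offset m \<le> block_offset n"
  unfolding block_offset_def by (intro div_le_mono mult_le_mono) auto

lemma block_offset_less:
  assumes "i \<le> n" "1 \<le> i'" "n < n'"
  shows "block_offset n + i < block_offset n' + i'"
proof -
  have "block_offset (Suc n) \<le> block_offset n'" using assms by (intro block_offset_mono) simp
  with assms show ?thesis by (simp add: block_offset_Suc)
qed

lemma blk_block_offset:
  assumes "1 \<le> i" "i \<le> n"
  shows "blk (block_offset n + i) = (n, i)"
  unfolding blk_def block_offset_def[symmetric]
proof (rule the_equality)
  fix p :: "nat \<times> nat"
  assume p: "1 \<le> snd p \<and> snd p \<le> fst p \<and> block_offset n + i = block_offset (fst p) + snd p"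
  then have "\<not> n < fst p" "\<not> fst p < n"
    using assms block_offset_less[of i n "snd p" "fst p"] block_offset_less[of "snd p" "fst p" i n]
    by auto
  with p show "p = (n, i)" by (cases p) auto
qed (use assms in auto)

lemma ex_block_offset: "1 \<le> k \<Longrightarrow> \<exists>n i. 1 \<le> i \<and> i \<le> n \<and> k = block_offset n + i"
proof (induction k)
  case 0
  then show ?case by simp
next
  case (Suc k)
  show ?case
  proof (cases "k = 0")
    case True
    then show ?thesis by (intro exI[of _ 1]) (simp add: block_offset_def)
  next
    case False
    then obtain n i where ni: "1 \<le> i" "i \<le> n" "k = block_offset n + i" using Suc by auto
    show ?thesis
    proof (cases "i < n")
      case True
      then show ?thesis using ni by (intro exI[of _ n] exI[of _ "Suc i"]) auto
    next
      case False
      then show ?thesis using ni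
        by (intro exI[of _ "Suc n"] exI[of _ 1]) (auto simp: block_offset_Suc)
    qed
  qed
qed

lemma Yseq_block_offset:
  "1 \<le> i \<Longrightarrow> i \<le> n \<Longrightarrow> Yseq (block_offset n + i) (p, j) = (if p = n then xcoord i j else 0)"
  by (simp add: Yseq_def blk_block_offset)

lemma Yseq_at_blk:
  assumes "1 \<le> k"
  shows "Yseq k (blk k) = 1"
proof -
  obtain n i where "1 \<le> i" "i \<le> n" "k = block_offset n + i"
    using ex_block_offset assms by blast
  then show ?thesis by (simp add: blk_block_offset Yseq_block_offset xcoord_def)
qed

lemma Yseq_after_blk:
  assumes "1 \<le> k" "k < k'"
  shows "Yseq k' (blk k) = 0"
proof -
  obtain n i where ni: "1 \<le> i" "i \<le> n" "k = block_offset n + i"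
    using ex_block_offset assms(1) by blast
  obtain n' i' where ni': "1 \<le> i'" "i' \<le> n'" "k' = block_offset n' + i'"
    using ex_block_offset assms by (metis le_trans less_imp_le_nat)
  have "i < i'" if "n = n'" using assms ni ni' that by simp
  then show ?thesis
    using ni ni' by (cases "n = n'") (auto simp: blk_block_offset Yseq_block_offset xcoord_def)
qed

lemma finite_support_Yseq: "finite {t. Yseq k t \<noteq> 0}"
proof (rule finite_subset)
  show "{t. Yseq k t \<noteq> 0} \<subseteq> {fst (blk k)} \<times> {..2 * snd (blk k) + 2}"
    by (auto simp: Yseq_def xcoord_def split: if_splits)
qed simp

definition tree_sum :: "nat \<Rightarrow> nat \<Rightarrow> real" where
  "tree_sum r j = (\<Sum>i\<in>{1..r}. tree_weight i * xcoord i j)"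

lemma tree_sum_eq:
  "tree_sum r j = (if 1 \<le> j \<and> j \<le> r then tree_weight j else 0)
    - (if 3 \<le> j \<and> (j - 1) div 2 \<le> r then tree_weight j else 0)"
proof (induction r)
  case 0
  then show ?case by (auto simp: tree_sum_def)
next
  case (Suc r)
  have step: "tree_sum (Suc r) j = tree_sum r j + tree_weight (Suc r) * xcoord (Suc r) j"
    by (simp add: tree_sum_def)
  consider "j = Suc r" | "j = 2 * Suc r + 1 \<or> j = 2 * Suc r + 2" | "xcoord (Suc r) j = 0"
    by (cases "j = Suc r \<or> j = 2 * Suc r + 1 \<or> j = 2 * Suc r + 2") (auto simp: xcoord_def)
  then show ?case
  proof cases
    case 1
    then show ?thesis unfolding step Suc by (auto simp: xcoord_def)
  next
    case 2
    then have "(j - 1) div 2 = Suc r" "3 \<le> j" by auto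
    then have "tree_weight j = tree_weight (Suc r) / 2" by (simp add: tree_weight_child)
    with 2 show ?thesis unfolding step Suc by (auto simp: xcoord_def)
  next
    case 3
    then have "j \<noteq> Suc r" "(j - 1) div 2 \<le> Suc r \<longleftrightarrow> (j - 1) div 2 \<le> r"
      by (auto simp: xcoord_def split: if_splits)
    with 3 show ?thesis unfolding step Suc by auto
  qed
qed

lemma tree_sum_at_parent: "3 \<le> j \<Longrightarrow> tree_sum ((j - 1) div 2) j = - tree_weight j"
  by (simp add: tree_sum_eq)

lemma tree_sum_eq_0: "2 * r + 2 < j \<Longrightarrow> tree_sum r j = 0"
  by (simp add: tree_sum_eq)

lemma abs_tree_sum_le:
  assumes "2 \<le> N"
  shows "\<bar>tree_sum N j\<bar> \<le> (if j \<le> 2 then 1 else 0) + (if N < j then 4 / (real N + 3) else 0)"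
proof -
  consider "j = 0" | "j = 1 \<or> j = 2" | "3 \<le> j" "j \<le> N" | "3 \<le> j" "N < j" by linarith
  then show ?thesis
  proof cases
    case 1
    then show ?thesis by (simp add: tree_sum_eq)
  next
    case 2
    then show ?thesis using assms by (auto simp: tree_sum_eq tree_weight_small)
  next
    case 3
    then have "(j - 1) div 2 \<le> N" by auto
    with 3 show ?thesis by (simp add: tree_sum_eq)
  next
    case 4
    have "\<bar>tree_sum N j\<bar> \<le> tree_weight j"
      unfolding tree_sum_eq using 4 tree_weight_pos[of j] by auto
    also have "\<dots> \<le> 4 / (real j + 2)" by (rule tree_weight_upper)
    also have "\<dots> \<le> 4 / (real N + 3)" using 4 by (intro divide_left_mono) auto
    finally show ?thesis using 4 by simp
  qed
qed

lemma sum_abs_tree_sum_le_7: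
  assumes "2 \<le> N"
  shows "(\<Sum>j\<in>{0..2 * N + 2}. \<bar>tree_sum N j\<bar>) \<le> 7"
proof -
  have "(\<Sum>j\<in>{0..2 * N + 2}. \<bar>tree_sum N j\<bar>)
      \<le> (\<Sum>j\<in>{0..2 * N + 2}. (if j \<le> 2 then 1 else 0) + (if N < j then 4 / (real N + 3) else 0))"
    by (rule sum_mono) (rule abs_tree_sum_le[OF assms])
  also have "\<dots> = (\<Sum>j\<in>{j \<in> {0..2 * N + 2}. j \<le> 2}. 1)
      + (\<Sum>j\<in>{j \<in> {0..2 * N + 2}. N < j}. 4 / (real N + 3))"
    unfolding sum.distrib by (simp only: sum.inter_filter finite_atLeastAtMost)
  also have "{j \<in> {0..2 * N + 2}. j \<le> 2} = {0..2}" by auto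
  also have "{j \<in> {0..2 * N + 2}. N < j} = {N + 1..2 * N + 2}" by auto
  also have "(\<Sum>j\<in>{0..2::nat}. 1) + (\<Sum>j\<in>{N + 1..2 * N + 2}. 4 / (real N + 3))
      = 3 + (real N + 2) * (4 / (real N + 3))" by (simp add: numeral_3_eq_3)
  also have "(real N + 2) * (4 / (real N + 3)) \<le> 4" by (simp add: field_simps)
  finally show ?thesis by simp
qed

lemma sum_abs_tree_sum_ge_1:
  assumes "1 \<le> N"
  shows "1 \<le> (\<Sum>j\<in>{0..2 * N + 2}. \<bar>tree_sum N j\<bar>)"
proof -
  have "\<bar>tree_sum N 1\<bar> \<le> (\<Sum>j\<in>{0..2 * N + 2}. \<bar>tree_sum N j\<bar>)"
    by (rule member_le_sum) auto
  then show ?thesis using assms by (simp add: tree_sum_eq tree_weight_small)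
qed

definition block_coeffs :: "nat \<Rightarrow> real \<Rightarrow> nat \<Rightarrow> real" where
  "block_coeffs N s k =
    (if block_offset N < k \<and> k \<le> block_offset N + N then s * tree_weight (k - block_offset N) else 0)"

lemma partial_sum_block_coeffs:
  assumes "n \<le> block_offset N + N"
  shows "(\<Sum>k\<in>{1..n}. block_coeffs N s k * Yseq k (p, j))
    = (if p = N then s * tree_sum (n - block_offset N) j else 0)"
proof -
  define r where "r = n - block_offset N"
  have "(\<Sum>k\<in>{1..n}. block_coeffs N s k * Yseq k (p, j))
      = (\<Sum>k\<in>{block_offset N + 1..block_offset N + r}. block_coeffs N s k * Yseq k (p, j))"
    by (rule sum.mono_neutral_right) (auto simp: r_def block_coeffs_def)
  also have "\<dots> = (\<Sum>i\<in>{1..r}.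
      block_coeffs N s (block_offset N + i) * Yseq (block_offset N + i) (p, j))"
    using sum.shift_bounds_cl_nat_ivl[of _ 1 "block_offset N" r] by (simp add: add.commute)
  also have "\<dots> = (\<Sum>i\<in>{1..r}. if p = N then s * (tree_weight i * xcoord i j) else 0)"
    using assms by (intro sum.cong) (auto simp: r_def block_coeffs_def Yseq_block_offset)
  also have "\<dots> = (if p = N then s * tree_sum r j else 0)"
    by (simp add: tree_sum_def sum_distrib_left)
  finally show ?thesis unfolding r_def .
qed

definition block_vector :: "nat \<Rightarrow> real \<Rightarrow> nat \<times> nat \<Rightarrow> real" where
  "block_vector N s = (\<lambda>t. \<Sum>k\<in>{1..block_offset N + N}. block_coeffs N s k * Yseq k t)"

lemma block_vector_apply: "block_vector N s (p, j) = (if p = N then s * tree_sum N j else 0)"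
  unfolding block_vector_def using partial_sum_block_coeffs[of "block_offset N + N" N s p j] by simp

lemma l1norm_block_vector:
  "l1norm (block_vector N s) = \<bar>s\<bar> * (\<Sum>j\<in>{0..2 * N + 2}. \<bar>tree_sum N j\<bar>)"
proof -
  have "l1norm (block_vector N s) = (\<Sum>t\<in>Pair N ` {0..2 * N + 2}. \<bar>block_vector N s t\<bar>)"
  proof (rule l1norm_finite_support)
    fix t :: "nat \<times> nat" assume t: "t \<notin> Pair N ` {0..2 * N + 2}"
    obtain p j where pj: "t = (p, j)" by fastforce
    with t have "p = N \<Longrightarrow> 2 * N + 2 < j" by force
    with pj show "block_vector N s t = 0"
      by (auto simp: block_vector_apply tree_sum_eq_0)
  qed simp
  also have "\<dots> = (\<Sum>j\<in>{0..2 * N + 2}. \<bar>s\<bar> * \<bar>tree_sum N j\<bar>)"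
    by (simp add: sum.reindex inj_on_def block_vector_apply abs_mult)
  finally show ?thesis unfolding sum_distrib_left .
qed

lemma block_vector_in_l1_closed_span: "block_vector N s \<in> l1_closed_span Yseq"
proof -
  have "finite {t. block_vector N s t \<noteq> 0}"
    unfolding block_vector_def by (rule finite_support_lincomb) (simp_all add: finite_support_Yseq)
  moreover have "block_vector N s \<in> l1_span Yseq"
    unfolding l1_span_def block_vector_def by blast
  moreover have "l1norm (\<lambda>t. block_vector N s t - block_vector N s t) < \<epsilon>" if "0 < \<epsilon>" for \<epsilon>
    using that by (simp add: l1norm_def)
  ultimately show ?thesis
    unfolding l1_closed_span_def by (blast intro: l1space_finite_support)
qed

lemma l1_coeffs_block_vector: "l1_coeffs Yseq (block_vector N s) = block_coeffs N s"
  unfolding block_vector_def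
  by (rule l1_coeffs_lincomb[where pivot = blk])
    (simp_all add: Yseq_at_blk Yseq_after_blk finite_support_Yseq block_coeffs_def)

lemma greedy_sum_block_vector:
  assumes "s \<noteq> 0" "n \<le> N"
  shows "greedy_sum Yseq (block_vector N s) n
    = (\<lambda>t. \<Sum>k\<in>{1..block_offset N + n}. block_coeffs N s k * Yseq k t)"
proof
  fix t
  have supp: "block_coeffs N s k \<noteq> 0 \<longleftrightarrow> block_offset N < k \<and> k \<le> block_offset N + N" for k
    using assms tree_weight_pos[of "k - block_offset N"] by (simp add: block_coeffs_def)
  have antimono: "\<bar>block_coeffs N s k'\<bar> \<le> \<bar>block_coeffs N s k\<bar>"
    if "block_offset N < k" "k \<le> k'" "k' \<le> block_offset N + N" for k k'
    using that tree_weight_antimono[of "k - block_offset N" "k' - block_offset N"]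
    by (simp add: block_coeffs_def abs_mult mult_left_mono abs_of_pos[OF tree_weight_pos])
  have "greedy_sum Yseq (block_vector N s) n t
      = (\<Sum>k\<in>{block_offset N + 1..block_offset N + n}. block_coeffs N s k * Yseq k t)"
    unfolding greedy_sum_def l1_coeffs_block_vector
    by (rule sum_greedy_set_nonincreasing_block[OF supp antimono \<open>n \<le> N\<close>])
  also have "\<dots> = (\<Sum>k\<in>{1..block_offset N + n}. block_coeffs N s k * Yseq k t)"
    by (rule sum.mono_neutral_left) (auto simp: block_coeffs_def)
  finally show "greedy_sum Yseq (block_vector N s) n t
      = (\<Sum>k\<in>{1..block_offset N + n}. block_coeffs N s k * Yseq k t)" .
qed

lemma sum_tree_weight_le_l1norm_Max_partial_sums:
  assumes "1 \<le> N" "finite I" "(+) (block_offset N) ` {1..N} \<subseteq> I"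
  shows "\<bar>s\<bar> * (\<Sum>j\<in>{3..2 * N + 2}. tree_weight j)
    \<le> l1norm (\<lambda>t. Max ((\<lambda>n. \<bar>\<Sum>k\<in>{1..n}. block_coeffs N s k * Yseq k t\<bar>) ` I))"
proof -
  have "\<bar>s\<bar> * (\<Sum>j\<in>{3..2 * N + 2}. tree_weight j) = (\<Sum>j\<in>{3..2 * N + 2}. \<bar>s\<bar> * tree_weight j)"
    by (rule sum_distrib_left)
  also have "\<dots> = (\<Sum>t\<in>Pair N ` {3..2 * N + 2}. \<bar>s\<bar> * tree_weight (snd t))"
    by (simp add: sum.reindex inj_on_def)
  also have "\<dots> \<le> l1norm (\<lambda>t. Max ((\<lambda>n. \<bar>\<Sum>k\<in>{1..n}. block_coeffs N s k * Yseq k t\<bar>) ` I))"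
  proof (rule sum_le_l1norm_Max_abs)
    show "I \<noteq> {}" using assms by auto
    show "finite {t. (\<Sum>k\<in>{1..n}. block_coeffs N s k * Yseq k t) \<noteq> 0}" for n
      by (rule finite_support_lincomb) (simp_all add: finite_support_Yseq)
    fix t assume "t \<in> Pair N ` {3..2 * N + 2}"
    then obtain j where t: "t = (N, j)" and j: "3 \<le> j" "j \<le> 2 * N + 2" by auto
    \<comment> \<open>the partial sum ending at the parent of \<open>j\<close> leaves coordinate \<open>j\<close> uncancelled\<close>
    let ?n = "block_offset N + (j - 1) div 2"
    have "?n \<le> block_offset N + N" using j by auto
    from partial_sum_block_coeffs[OF this, of s N j]
    have "(\<Sum>k\<in>{1..?n}. block_coeffs N s k * Yseq k t) = s * tree_sum ((j - 1) div 2) j"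
      using t by simp
    then have "\<bar>s\<bar> * tree_weight (snd t) \<le> \<bar>\<Sum>k\<in>{1..?n}. block_coeffs N s k * Yseq k t\<bar>"
      using t tree_sum_at_parent[OF j(1)] tree_weight_pos[of j] by (simp add: abs_mult)
    moreover have "?n \<in> I" using assms j by force
    ultimately show "\<exists>n\<in>I. \<bar>s\<bar> * tree_weight (snd t) \<le> \<bar>\<Sum>k\<in>{1..n}. block_coeffs N s k * Yseq k t\<bar>"
      by blast
  qed (use assms in simp_all)
  finally show ?thesis .
qed

lemma not_l1_bibasic_Yseq: "\<not> l1_bibasic Yseq"
proof
  assume "l1_bibasic Yseq"
  then obtain M where M: "1 \<le> M" and bibasic: "\<forall>m\<ge>1. \<forall>a::nat \<Rightarrow> real.
      l1norm (\<lambda>t. Max ((\<lambda>n. \<bar>\<Sum>k\<in>{1..n}. a k * Yseq k t\<bar>) ` {1..m}))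
        \<le> M * l1norm (\<lambda>t. \<Sum>k\<in>{1..m}. a k * Yseq k t)"
    unfolding l1_bibasic_def by blast
  obtain N where N: "2 \<le> N" and big: "7 * M < (\<Sum>j\<in>{3..2 * N + 2}. tree_weight j)"
    using sum_tree_weight_unbounded by blast
  define m where "m = block_offset N + N"
  have "(\<Sum>j\<in>{3..2 * N + 2}. tree_weight j)
      \<le> l1norm (\<lambda>t. Max ((\<lambda>n. \<bar>\<Sum>k\<in>{1..n}. block_coeffs N 1 k * Yseq k t\<bar>) ` {1..m}))"
    using sum_tree_weight_le_l1norm_Max_partial_sums[of N "{1..m}" 1] N by (auto simp: m_def)
  also have "\<dots> \<le> M * l1norm (block_vector N 1)"
    using bibasic N unfolding block_vector_def m_def by simp
  also have "\<dots> \<le> M * 7"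
    using M sum_abs_tree_sum_le_7[OF N] by (simp add: l1norm_block_vector)
  finally show False using big by simp
qed

lemma not_l1_uniformly_quasi_greedy_Yseq: "\<not> l1_uniformly_quasi_greedy Yseq"
proof
  assume "l1_uniformly_quasi_greedy Yseq"
  then obtain C where quasi_greedy: "\<forall>m\<ge>1. \<forall>y\<in>l1_closed_span Yseq. l1norm y = 1 \<longrightarrow>
      l1norm (\<lambda>t. Max ((\<lambda>n. \<bar>greedy_sum Yseq y n t\<bar>) ` {1..m})) \<le> C"
    unfolding l1_uniformly_quasi_greedy_def by blast
  obtain N where N: "2 \<le> N" and big: "7 * \<bar>C\<bar> < (\<Sum>j\<in>{3..2 * N + 2}. tree_weight j)"
    using sum_tree_weight_unbounded by blast
  define total where "total = (\<Sum>j\<in>{3..2 * N + 2}. tree_weight j)"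
  define mass where "mass = (\<Sum>j\<in>{0..2 * N + 2}. \<bar>tree_sum N j\<bar>)"
  have mass_bounds: "1 \<le> mass" "mass \<le> 7"
    using N sum_abs_tree_sum_ge_1 sum_abs_tree_sum_le_7 by (simp_all add: mass_def)
  define y where "y = block_vector N (1 / mass)"
  have "l1norm y = 1"
    unfolding y_def l1norm_block_vector mass_def[symmetric] using mass_bounds by simp
  have "(\<lambda>n. \<bar>greedy_sum Yseq y n t\<bar>) ` {1..N}
      = (\<lambda>n. \<bar>\<Sum>k\<in>{1..n}. block_coeffs N (1 / mass) k * Yseq k t\<bar>) ` (+) (block_offset N) ` {1..N}"
    for t
    unfolding image_image y_def using mass_bounds
    by (intro image_cong) (simp_all add: greedy_sum_block_vector)
  then have "(1 / mass) * total \<le> l1norm (\<lambda>t. Max ((\<lambda>n. \<bar>greedy_sum Yseq y n t\<bar>) ` {1..N}))"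
    using sum_tree_weight_le_l1norm_Max_partial_sums[of N _ "1 / mass"] N mass_bounds
    by (simp add: total_def)
  also have "\<dots> \<le> C"
    using quasi_greedy N \<open>l1norm y = 1\<close> block_vector_in_l1_closed_span by (simp add: y_def)
  finally have "total \<le> mass * C"
    using mass_bounds by (simp add: field_simps)
  also have "\<dots> \<le> mass * \<bar>C\<bar>" using mass_bounds by (simp add: mult_left_mono)
  also have "\<dots> \<le> 7 * \<bar>C\<bar>" using mass_bounds by (simp add: mult_right_mono)
  finally show False using big by (simp add: total_def)
qed

theorem proposition4p1:
  shows "\<not> l1_uniformly_quasi_greedy Yseq \<and> \<not> l1_bibasic Yseq"
  using not_l1_uniformly_quasi_greedy_Yseq not_l1_bibasic_Yseq by blast

end
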